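(* Let $n\ge 3$ and let $K_{1,n}^\sigma=(K_{1,n},\sigma)$ be a signed star that is non-homogeneous (it has at least one positive and at least one negative edge). Then $\dim(K_{1,n}^\sigma)=n-2$.
   Context: A signed graph $\Sigma=(G,\sigma)$ consists of a finite simple connected graph $G=(V,E)$ and a signature $\sigma:E\to\{+1,-1\}$; it is homogeneous if all edges have the same sign and non-homogeneous otherwise. For vertices $u,v$, $d(u,v)$ denotes the usual distance in $G$; the sign of a path $P$ is $\sigma(P)=\prod_{e\in P}\sigma(e)$. Set $\sigma_{\max}(uv)=-1$ if every shortest $u$–$v$ path has sign $-1$, and $\sigma_{\max}(uv)=+1$ otherwise; set $\sigma_{\min}(uv)=+1$ if every shortest $u$–$v$ path has sign $+1$, and $\sigma_{\min}(uv)=-1$ otherwise. $\Sigma$ is (distance) compatible if $\sigma_{\max}(uv)d(u,v)=\sigma_{\min}(uv)d(u,v)$ for all vertices $u,v$ (trees are always compatible); in that case the signed distance is $d_\Sigma(u,v)=\sigma_{\max}(uv)\,d(u,v)$. For a compatible $\Sigma$ and an ordered subset $W=(w_1,\dots,w_k)$ of $V$, the metric representation of $v\in V$ is $r_\Sigma(v|W)=(d_\Sigma(v,w_1),\dots,d_\Sigma(v,w_k))$. $W$ is a resolving set of $\Sigma$ if $r_\Sigma(u|W)\neq r_\Sigma(v|W)$ for all distinct $u,v\in V$; a basis is a resolving set of minimum cardinality, and that cardinality is the metric dimension $\dim(\Sigma)$. *)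

theory Defs
  imports Main
begin

definition simple_graph :: "'a set \<Rightarrow> 'a set set \<Rightarrow> bool" where
  "simple_graph V E \<longleftrightarrow> finite V \<and> (\<forall>e\<in>E. \<exists>u v. e = {u, v} \<and> u \<in> V \<and> v \<in> V \<and> u \<noteq> v)"

definition is_path :: "'a set \<Rightarrow> 'a set set \<Rightarrow> 'a list \<Rightarrow> bool" where
  "is_path V E p \<longleftrightarrow> p \<noteq> [] \<and> set p \<subseteq> V \<and> distinct p \<and>
      (\<forall>i. Suc i < length p \<longrightarrow> {p ! i, p ! Suc i} \<in> E)"

definition connected_graph :: "'a set \<Rightarrow> 'a set set \<Rightarrow> bool" where
  "connected_graph V E \<longleftrightarrow> (\<forall>u\<in>V. \<forall>v\<in>V. \<exists>p. is_path V E p \<and> hd p = u \<and> last p = v)"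

definition signed_graph :: "'a set \<Rightarrow> 'a set set \<Rightarrow> ('a set \<Rightarrow> int) \<Rightarrow> bool" where
  "signed_graph V E \<sigma> \<longleftrightarrow> simple_graph V E \<and> connected_graph V E \<and> (\<forall>e\<in>E. \<sigma> e \<in> {1, -1})"

definition path_len :: "'a list \<Rightarrow> nat" where
  "path_len p = length p - 1"

definition gdist :: "'a set \<Rightarrow> 'a set set \<Rightarrow> 'a \<Rightarrow> 'a \<Rightarrow> nat" where
  "gdist V E u v = (LEAST n. \<exists>p. is_path V E p \<and> hd p = u \<and> last p = v \<and> path_len p = n)"

definition shortest_paths :: "'a set \<Rightarrow> 'a set set \<Rightarrow> 'a \<Rightarrow> 'a \<Rightarrow> 'a list set" where
  "shortest_paths V E u v =
     {p. is_path V E p \<and> hd p = u \<and> last p = v \<and> path_len p = gdist V E u v}"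

definition path_sign :: "('a set \<Rightarrow> int) \<Rightarrow> 'a list \<Rightarrow> int" where
  "path_sign \<sigma> p = prod_list (map (\<lambda>(x, y). \<sigma> {x, y}) (zip p (tl p)))"

definition sigma_max :: "'a set \<Rightarrow> 'a set set \<Rightarrow> ('a set \<Rightarrow> int) \<Rightarrow> 'a \<Rightarrow> 'a \<Rightarrow> int" where
  "sigma_max V E \<sigma> u v =
     (if \<forall>p\<in>shortest_paths V E u v. path_sign \<sigma> p = -1 then -1 else 1)"

definition sigma_min :: "'a set \<Rightarrow> 'a set set \<Rightarrow> ('a set \<Rightarrow> int) \<Rightarrow> 'a \<Rightarrow> 'a \<Rightarrow> int" where
  "sigma_min V E \<sigma> u v =
     (if \<forall>p\<in>shortest_paths V E u v. path_sign \<sigma> p = 1 then 1 else -1)"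

definition compatible :: "'a set \<Rightarrow> 'a set set \<Rightarrow> ('a set \<Rightarrow> int) \<Rightarrow> bool" where
  "compatible V E \<sigma> \<longleftrightarrow> (\<forall>u\<in>V. \<forall>v\<in>V.
      sigma_max V E \<sigma> u v * int (gdist V E u v) = sigma_min V E \<sigma> u v * int (gdist V E u v))"

definition signed_dist :: "'a set \<Rightarrow> 'a set set \<Rightarrow> ('a set \<Rightarrow> int) \<Rightarrow> 'a \<Rightarrow> 'a \<Rightarrow> int" where
  "signed_dist V E \<sigma> u v = sigma_max V E \<sigma> u v * int (gdist V E u v)"

text \<open>W resolves: distinct vertices have distinct vectors of signed distances to W
  (the ordering of W is irrelevant for this).\<close>
definition resolving_set :: "'a set \<Rightarrow> 'a set set \<Rightarrow> ('a set \<Rightarrow> int) \<Rightarrow> 'a set \<Rightarrow> bool" where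
  "resolving_set V E \<sigma> W \<longleftrightarrow> W \<subseteq> V \<and>
     (\<forall>u\<in>V. \<forall>v\<in>V. u \<noteq> v \<longrightarrow> (\<exists>w\<in>W. signed_dist V E \<sigma> u w \<noteq> signed_dist V E \<sigma> v w))"

definition metric_dim :: "'a set \<Rightarrow> 'a set set \<Rightarrow> ('a set \<Rightarrow> int) \<Rightarrow> nat" where
  "metric_dim V E \<sigma> = (LEAST k. \<exists>W. resolving_set V E \<sigma> W \<and> card W = k)"

definition is_star :: "'a set \<Rightarrow> 'a set set \<Rightarrow> nat \<Rightarrow> bool" where
  "is_star V E n \<longleftrightarrow> (\<exists>c L. c \<notin> L \<and> finite L \<and> card L = n \<and> V = insert c L \<and>
      E = (\<lambda>l. {c, l}) ` L)"

definition non_homogeneous :: "'a set set \<Rightarrow> ('a set \<Rightarrow> int) \<Rightarrow> bool" where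
  "non_homogeneous E \<sigma> \<longleftrightarrow> (\<exists>e\<in>E. \<sigma> e = 1) \<and> (\<exists>e\<in>E. \<sigma> e = -1)"

end

theory Submission imports Defs begin

text \<open>In a star every vertex pair is joined by a unique shortest path, so the signed distances are
  explicit: \<open>\<sigma>(cl)\<close> between the centre \<open>c\<close> and a leaf \<open>l\<close>, and \<open>2 \<sigma>(cl) \<sigma>(cl')\<close> between
  distinct leaves. Hence two leaves outside a resolving set \<open>W\<close> must carry different signs (a
  landmark cannot tell same-signed leaves apart), so \<open>W\<close> misses at most two leaves. Conversely,
  the leaves other than one positive leaf \<open>p\<close> and one negative leaf \<open>q\<close> form a resolving set:
  any remaining leaf \<open>w\<close> sees \<open>c, p, q\<close> at the distinct values \<open>\<sigma>(cw), 2\<sigma>(cw), -2\<sigma>(cw)\<close>,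
  and every vertex of the set is resolved by itself, signed distances of distinct vertices
  being nonzero.\<close>

lemma is_path_Cons_Cons:
  "is_path V E (a # b # p) \<longleftrightarrow> a \<in> V \<and> a \<notin> set (b # p) \<and> {a, b} \<in> E \<and> is_path V E (b # p)"
proof -
  have "(\<forall>i. Suc i < length (a # b # p) \<longrightarrow> {(a # b # p) ! i, (a # b # p) ! Suc i} \<in> E) \<longleftrightarrow>
        {a, b} \<in> E \<and> (\<forall>i. Suc i < length (b # p) \<longrightarrow> {(b # p) ! i, (b # p) ! Suc i} \<in> E)"
    by (auto simp: All_less_Suc2 less_Suc_eq_0_disj)
  then show ?thesis
    unfolding is_path_def by auto
qed

lemma is_path_singleton: "is_path V E [x] \<longleftrightarrow> x \<in> V"
  by (simp add: is_path_def)

lemma path_len_pos: "is_path V E p \<Longrightarrow> hd p \<noteq> last p \<Longrightarrow> path_len p > 0"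
  by (cases p) (auto simp: is_path_def path_len_def)

lemma gdist_eqI:
  assumes "is_path V E p" "hd p = u" "last p = v" "path_len p = k"
    and "\<And>q. is_path V E q \<Longrightarrow> hd q = u \<Longrightarrow> last q = v \<Longrightarrow> k \<le> path_len q"
  shows "gdist V E u v = k"
  unfolding gdist_def using assms by (intro Least_equality) blast+

lemma gdist_self: "x \<in> V \<Longrightarrow> gdist V E x x = 0"
  by (rule gdist_eqI[of V E "[x]"]) (auto simp: is_path_singleton path_len_def)

lemma signed_dist_self: "x \<in> V \<Longrightarrow> signed_dist V E \<sigma> x x = 0"
  by (simp add: signed_dist_def gdist_self)

lemma shortest_paths_singletonI:
  assumes "is_path V E p" "hd p = u" "last p = v" "gdist V E u v = path_len p"
    and "\<And>q. is_path V E q \<Longrightarrow> hd q = u \<Longrightarrow> last q = v \<Longrightarrow> length q = length p \<Longrightarrow> q = p"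
  shows "shortest_paths V E u v = {p}"
proof -
  have same_length: "length q = length p" if "is_path V E q" "path_len q = path_len p" for q
  proof -
    have "q \<noteq> []" "p \<noteq> []"
      using that(1) assms(1) by (auto simp: is_path_def)
    then show ?thesis
      using that(2) unfolding path_len_def by (simp add: Suc_diff_1[symmetric] flip: length_greater_0_conv)
  qed
  show ?thesis
    unfolding shortest_paths_def
  proof (intro equalityI subsetI)
    fix q assume "q \<in> {q. is_path V E q \<and> hd q = u \<and> last q = v \<and> path_len q = gdist V E u v}"
    then show "q \<in> {p}"
      using assms(4,5) same_length by simp
  qed (use assms(1-4) in simp)
qed

lemma signed_dist_unique_shortest_path:
  assumes "shortest_paths V E u v = {p}" and "path_sign \<sigma> p \<in> {1, -1}"
  shows "signed_dist V E \<sigma> u v = path_sign \<sigma> p * int (gdist V E u v)"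
  using assms by (auto simp: signed_dist_def sigma_max_def)

lemma
  assumes "{x, y} \<in> E" "x \<in> V" "y \<in> V" "x \<noteq> y"
  shows gdist_edge: "gdist V E x y = 1"
    and shortest_paths_edge: "shortest_paths V E x y = {[x, y]}"
proof -
  have xy: "is_path V E [x, y]"
    using assms by (simp add: is_path_Cons_Cons is_path_singleton)
  show dist: "gdist V E x y = 1"
  proof (rule gdist_eqI[OF xy])
    fix q assume "is_path V E q" "hd q = x" "last q = y"
    then show "1 \<le> path_len q"
      using path_len_pos assms(4) by fastforce
  qed (simp_all add: path_len_def)
  show "shortest_paths V E x y = {[x, y]}"
  proof (rule shortest_paths_singletonI[OF xy])
    fix q :: "'a list" assume "hd q = x" "last q = y" "length q = length [x, y]"
    then show "q = [x, y]"
      by (auto simp: numeral_2_eq_2 length_Suc_conv)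
  qed (simp_all add: dist path_len_def)
qed

lemma signed_dist_edge:
  assumes "{x, y} \<in> E" "x \<in> V" "y \<in> V" "x \<noteq> y" "\<sigma> {x, y} \<in> {1, -1}"
  shows "signed_dist V E \<sigma> x y = \<sigma> {x, y}"
  using assms by (simp add: signed_dist_unique_shortest_path shortest_paths_edge gdist_edge
      path_sign_def)

lemma metric_dim_eqI:
  assumes "resolving_set V E \<sigma> W" "card W = k"
    and "\<And>W'. resolving_set V E \<sigma> W' \<Longrightarrow> k \<le> card W'"
  shows "metric_dim V E \<sigma> = k"
  unfolding metric_dim_def using assms by (intro Least_equality) blast+

locale signed_star =
  fixes c :: 'a and L :: "'a set" and V E and \<sigma> :: "'a set \<Rightarrow> int"
  assumes centre_notin_leaves: "c \<notin> L"
    and vertices: "V = insert c L"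
    and edges: "E = (\<lambda>l. {c, l}) ` L"
    and signs: "\<forall>e\<in>E. \<sigma> e \<in> {1, -1}"
begin

lemma edge_iff: "{x, y} \<in> E \<longleftrightarrow> (x = c \<and> y \<in> L) \<or> (y = c \<and> x \<in> L)"
  using centre_notin_leaves unfolding edges by (auto simp: doubleton_eq_iff)

lemma leaf_sign: "l \<in> L \<Longrightarrow> \<sigma> {c, l} = 1 \<or> \<sigma> {c, l} = -1"
  using signs unfolding edges by auto

lemma
  assumes "l \<in> L"
  shows signed_dist_centre_leaf: "signed_dist V E \<sigma> c l = \<sigma> {c, l}"
    and signed_dist_leaf_centre: "signed_dist V E \<sigma> l c = \<sigma> {c, l}"
proof -
  have "c \<in> V" "l \<in> V" "c \<noteq> l" "{c, l} \<in> E" "\<sigma> {c, l} \<in> {1, -1}"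
    using assms centre_notin_leaves leaf_sign[OF assms] by (auto simp: edge_iff vertices)
  then show "signed_dist V E \<sigma> c l = \<sigma> {c, l}" "signed_dist V E \<sigma> l c = \<sigma> {c, l}"
    using signed_dist_edge[of c l E V \<sigma>] signed_dist_edge[of l c E V \<sigma>] by (auto simp: insert_commute)
qed

lemma
  assumes "l \<in> L" "l' \<in> L" "l \<noteq> l'"
  shows gdist_leaf_leaf: "gdist V E l l' = 2"
    and shortest_paths_leaf_leaf: "shortest_paths V E l l' = {[l, c, l']}"
proof -
  have lc: "l \<noteq> c" "l' \<noteq> c"
    using assms centre_notin_leaves by auto
  have not_adjacent: "{l, l'} \<notin> E"
    using lc by (simp add: edge_iff)
  have lcl: "is_path V E [l, c, l']"
    using assms lc by (auto simp: is_path_Cons_Cons is_path_singleton edge_iff vertices)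
  show dist: "gdist V E l l' = 2"
  proof (rule gdist_eqI[OF lcl])
    fix q assume q: "is_path V E q" "hd q = l" "last q = l'"
    have "q \<noteq> [l, l']"
      using q(1) not_adjacent by (auto simp: is_path_Cons_Cons)
    then have "length q \<noteq> 2"
      using q(2,3) by (auto simp: numeral_2_eq_2 length_Suc_conv)
    then show "2 \<le> path_len q"
      using path_len_pos[OF q(1)] q(2,3) assms(3) by (simp add: path_len_def)
  qed (simp_all add: path_len_def)
  show "shortest_paths V E l l' = {[l, c, l']}"
  proof (rule shortest_paths_singletonI[OF lcl])
    fix q assume q: "is_path V E q" "hd q = l" "last q = l'" "length q = length [l, c, l']"
    then obtain b where b: "q = [l, b, l']"
      by (auto simp: numeral_3_eq_3 length_Suc_conv)
    then have "b = c"
      using q(1) lc by (auto simp: is_path_Cons_Cons edge_iff)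
    with b show "q = [l, c, l']"
      by simp
  qed (simp_all add: dist path_len_def)
qed

lemma signed_dist_leaf_leaf:
  assumes "l \<in> L" "l' \<in> L" "l \<noteq> l'"
  shows "signed_dist V E \<sigma> l l' = 2 * \<sigma> {c, l} * \<sigma> {c, l'}"
  using leaf_sign[OF assms(1)] leaf_sign[OF assms(2)]
  by (auto simp: signed_dist_unique_shortest_path shortest_paths_leaf_leaf[OF assms]
      gdist_leaf_leaf[OF assms] path_sign_def insert_commute)

lemma signed_dist_neq_0:
  assumes "x \<in> V" "y \<in> V" "x \<noteq> y"
  shows "signed_dist V E \<sigma> x y \<noteq> 0"
proof -
  consider "x = c" "y \<in> L" | "x \<in> L" "y = c" | "x \<in> L" "y \<in> L"
    using assms vertices by auto
  then show ?thesis
    by cases (use assms(3) leaf_sign[of x] leaf_sign[of y] in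
        \<open>auto simp: signed_dist_centre_leaf signed_dist_leaf_centre signed_dist_leaf_leaf\<close>)
qed

lemma resolving_set_leaves_Diff:
  assumes p: "p \<in> L" "\<sigma> {c, p} = 1" and q: "q \<in> L" "\<sigma> {c, q} = -1"
    and w: "w \<in> L - {p, q}"
  shows "resolving_set V E \<sigma> (L - {p, q})"
  unfolding resolving_set_def
proof (intro conjI ballI impI)
  show "L - {p, q} \<subseteq> V"
    using vertices by auto
next
  fix u v assume uv: "u \<in> V" "v \<in> V" "u \<noteq> v"
  show "\<exists>x\<in>L - {p, q}. signed_dist V E \<sigma> u x \<noteq> signed_dist V E \<sigma> v x"
  proof (cases "u \<in> L - {p, q} \<or> v \<in> L - {p, q}")
    case True
    then show ?thesis
      using uv signed_dist_self signed_dist_neq_0 by metis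
  next
    case False
    then have "u \<in> {c, p, q}" "v \<in> {c, p, q}"
      using uv vertices by auto
    moreover have "signed_dist V E \<sigma> c w = \<sigma> {c, w}"
      using w by (simp add: signed_dist_centre_leaf)
    moreover have "signed_dist V E \<sigma> p w = 2 * \<sigma> {c, w}" "signed_dist V E \<sigma> q w = - 2 * \<sigma> {c, w}"
      using w p q by (auto simp: signed_dist_leaf_leaf)
    ultimately have "signed_dist V E \<sigma> u w \<noteq> signed_dist V E \<sigma> v w"
      using uv(3) leaf_sign[of w] w by auto
    then show ?thesis
      using w by blast
  qed
qed

lemma leaves_outside_resolving_set_signs_differ:
  assumes W: "resolving_set V E \<sigma> W" and l: "l \<in> L - W" "l' \<in> L - W" "l \<noteq> l'"
  shows "\<sigma> {c, l} \<noteq> \<sigma> {c, l'}"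
proof
  assume same_sign: "\<sigma> {c, l} = \<sigma> {c, l'}"
  obtain w where w: "w \<in> W" "signed_dist V E \<sigma> l w \<noteq> signed_dist V E \<sigma> l' w"
    using W l vertices unfolding resolving_set_def by blast
  have "w = c \<or> w \<in> L - {l, l'}"
    using W w l vertices unfolding resolving_set_def by auto
  then show False
    using w l same_sign
    by (auto simp: signed_dist_leaf_centre signed_dist_leaf_leaf)
qed

lemma card_leaves_Diff_resolving_set:
  assumes "finite L" "resolving_set V E \<sigma> W"
  shows "card (L - W) \<le> 2"
proof -
  let ?P = "{l \<in> L. l \<notin> W \<and> \<sigma> {c, l} = 1}" and ?N = "{l \<in> L. l \<notin> W \<and> \<sigma> {c, l} = -1}"
  have "card ?P \<le> 1" "card ?N \<le> 1"
    using leaves_outside_resolving_set_signs_differ[OF assms(2)] assms(1)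
    by (force simp: card_le_Suc0_iff_eq)+
  moreover have "L - W = ?P \<union> ?N"
    using leaf_sign by auto
  then have "card (L - W) \<le> card ?P + card ?N"
    by (simp add: card_Un_le)
  ultimately show ?thesis
    by linarith
qed

lemma card_resolving_set_ge:
  assumes "finite L" "resolving_set V E \<sigma> W"
  shows "card L - 2 \<le> card W"
proof -
  have "finite W"
    using assms vertices unfolding resolving_set_def by (auto intro: finite_subset)
  then have "card L \<le> card ((L - W) \<union> W)"
    using assms(1) by (intro card_mono) auto
  also have "\<dots> \<le> card (L - W) + card W"
    by (rule card_Un_le)
  finally show ?thesis
    using card_leaves_Diff_resolving_set[OF assms] by linarith
qed

end

theorem theorem2p9:
  fixes V :: "'a set" and E :: "'a set set" and \<sigma> :: "'a set \<Rightarrow> int" and n :: nat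
  assumes "n \<ge> 3"
    and "is_star V E n"
    and "signed_graph V E \<sigma>"
    and "non_homogeneous E \<sigma>"
  shows "metric_dim V E \<sigma> = n - 2"
proof -
  obtain c L where star: "c \<notin> L" "finite L" "card L = n" "V = insert c L" "E = (\<lambda>l. {c, l}) ` L"
    using assms(2) unfolding is_star_def by blast
  interpret signed_star c L V E \<sigma>
    using star assms(3) by unfold_locales (auto simp: signed_graph_def)
  obtain p q where p: "p \<in> L" "\<sigma> {c, p} = 1" and q: "q \<in> L" "\<sigma> {c, q} = -1"
    using assms(4) star(5) unfolding non_homogeneous_def by auto
  have "p \<noteq> q"
    using p q by auto
  then have card_W: "card (L - {p, q}) = n - 2"
    using p q star by (simp add: card_Diff_subset)
  then have "card (L - {p, q}) > 0"
    using assms(1) by linarith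
  then obtain w where "w \<in> L - {p, q}"
    by (auto simp: card_gt_0_iff)
  then have "resolving_set V E \<sigma> (L - {p, q})"
    by (rule resolving_set_leaves_Diff[OF p q])
  moreover have "n - 2 \<le> card W" if "resolving_set V E \<sigma> W" for W
    using card_resolving_set_ge[OF star(2) that] star(3) by simp
  ultimately show ?thesis
    using card_W by (blast intro: metric_dim_eqI)
qed

end
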